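(* Let $\Delta\subseteq\mathbb{Q}^d$ be a $d$-dimensional IP simplex of Gorenstein index $g$ with associated unit fraction partition $A(\Delta)=(\alpha_0,\dots,\alpha_d)$. Then $A(\Delta)=A(\Delta^* )$ and \begin{enumerate} \item $\mathrm{Vol}(\Delta)\mathrm{Vol}(\Delta^* )=\dfrac{\alpha_0\cdots\alpha_d}{g^{d+1}}$; \item $\lambda(\Delta^* )\mathrm{Vol}(\Delta)=\lambda(\Delta)\mathrm{Vol}(\Delta^* )=\dfrac{1}{g^d}\dfrac{\alpha_0\cdots\alpha_d}{\mathrm{lcm}(\alpha_0,\dots,\alpha_d)}$; \item $\lambda(\Delta)\lambda(\Delta^* )=\dfrac{1}{g^{d-1}}\dfrac{\alpha_0\cdots\alpha_d}{\mathrm{lcm}(\alpha_0,\dots,\alpha_d)^2}$. \end{enumerate}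
   Context: An IP simplex is a full-dimensional rational simplex in $\mathbb{Q}^d$ containing the origin in its interior; its dual is $\Delta^*=\{u:\langle u,v\rangle\ge-1\ \forall v\in\Delta\}$ (again an IP simplex). Gorenstein index: $g(\Delta)=g_{\mathbb{Q}}(\Delta)g_{\mathbb{Q}}(\Delta^* )$, where $g_{\mathbb{Q}}(\Delta)$ is the least $k\ge1$ with $k\Delta$ having integral vertices. $\mathrm{Vol}=d!\cdot$Euclidean volume. For an IP simplex with vertices $v_0,\dots,v_d$ its weight system is $Q_\Delta=(q_0,\dots,q_d)$, $q_i=|\det(v_j:j\neq i)|$, and $|Q_\Delta|=q_0+\dots+q_d$. The factor $\lambda(\Delta)$ is the unique positive rational such that $Q_\Delta=\lambda(\Delta)\,Q'$ with $Q'$ a tuple of positive integers with $\gcd 1$. The associated unit fraction partition is $A(\Delta)=\big(\tfrac{g|Q_\Delta|}{q_0},\dots,\tfrac{g|Q_\Delta|}{q_d}\big)$, a tuple of positive integers with $\sum_i 1/\alpha_i=1/g$. *)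

theory Defs
  imports "HOL-Analysis.Analysis" "HOL-Library.Multiset"
begin

text \<open>Simplices live in the Euclidean space real^'n with d = CARD('n);
 rationality of Q^d is imposed by requiring rational vertex coordinates.\<close>

definition rat_vec :: "real^'n \<Rightarrow> bool" where
  "rat_vec x \<longleftrightarrow> (\<forall>i. x $ i \<in> \<rat>)"

definition int_vec :: "real^'n \<Rightarrow> bool" where
  "int_vec x \<longleftrightarrow> (\<forall>i. x $ i \<in> \<int>)"

definition IP_simplex :: "(real^'n) set \<Rightarrow> bool" where
  "IP_simplex S \<longleftrightarrow> (\<exists>V. finite V \<and> card V = CARD('n) + 1 \<and> \<not> affine_dependent V \<and>
      S = convex hull V \<and> (\<forall>v\<in>V. rat_vec v) \<and> 0 \<in> interior S)"

definition verts :: "(real^'n) set \<Rightarrow> (real^'n) set" where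
  "verts S = {x. x extreme_point_of S}"

definition dual :: "(real^'n) set \<Rightarrow> (real^'n) set" where
  "dual S = {u. \<forall>v\<in>S. inner u v \<ge> -1}"

definition gQ :: "(real^'n) set \<Rightarrow> nat" where
  "gQ S = (LEAST k::nat. k \<ge> 1 \<and> (\<forall>v\<in>verts S. int_vec (real k *\<^sub>R v)))"

definition gorenstein :: "(real^'n) set \<Rightarrow> nat" where
  "gorenstein S = gQ S * gQ (dual S)"

definition Vol :: "(real^'n) set \<Rightarrow> real" where
  "Vol S = fact CARD('n) * measure lborel S"

text \<open>Weight of vertex v: absolute value of the determinant of the other
 d vertices (listed in an arbitrary order; the absolute value does not depend on it).\<close>
definition weight :: "(real^'n) set \<Rightarrow> real^'n \<Rightarrow> real" where
  "weight S v = (let f = (SOME f. bij_betw f (UNIV::'n set) (verts S - {v}))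
                 in \<bar>det (\<chi> i. f i)\<bar>)"

definition weight_sum :: "(real^'n) set \<Rightarrow> real" where
  "weight_sum S = (\<Sum>v\<in>verts S. weight S v)"

definition lam :: "(real^'n) set \<Rightarrow> real" where
  "lam S = (THE l. l \<in> \<rat> \<and> l > 0 \<and>
      (\<exists>c :: real^'n \<Rightarrow> nat. (\<forall>v\<in>verts S. c v > 0 \<and> weight S v = l * real (c v))
          \<and> Gcd (c ` verts S) = 1))"

text \<open>Unit fraction partition, as a multiset (the vertices of a simplex are unordered).\<close>
definition ufp :: "(real^'n) set \<Rightarrow> real multiset" where
  "ufp S = image_mset (\<lambda>v. real (gorenstein S) * weight_sum S / weight S v) (mset_set (verts S))"

end

theory Submission
  imports Defs
begin

(*
  Write S = conv V and let mu be the barycentric coordinates of the origin, all positive.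
  The dual simplex S' is the convex hull of vectors u_x (x in V) with <u_x, y> = delta_xy / mu_x - 1,
  and the origin has the same barycentric coordinates mu with respect to the u_x.  Eliminating one
  vertex by sum_x mu_x x = 0 shows that the weight of the vertex x is mu_x Vol S, so |Q| = Vol S,
  lambda(S) = Vol S * lambda(mu) and A(S) = (g / mu_x)_x; the same holds for the dual simplex,
  whence A(S) = A(S').  The pairing <u_x, x> = 1/mu_x - 1 makes the g / mu_x integers with
  lcm g / lambda(mu), and the matrix of pairings of edge vectors with the u_x is diagonal, which
  gives Vol S * Vol S' = prod_x 1 / mu_x.
*)

(* Simplex_Content.content_simplex needs a wellordered index type; ord_copy is a wellordered copy
   of an arbitrary finite type, and measure_simplex transports the formula along the relabelling
   of coordinates. *)
typedef ('a::finite) ord_copy = "UNIV :: 'a set"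
  by simp

lemma to_nat_Rep_ord_copy_inject: "to_nat (Rep_ord_copy x) = to_nat (Rep_ord_copy y) \<longleftrightarrow> x = y"
  by (simp add: Rep_ord_copy_inject)

instantiation ord_copy :: (finite) linorder
begin
definition "x \<le> y \<longleftrightarrow> to_nat (Rep_ord_copy x) \<le> to_nat (Rep_ord_copy y)"
definition "x < y \<longleftrightarrow> to_nat (Rep_ord_copy x) < to_nat (Rep_ord_copy y)"
instance
proof
  fix x y z :: "'a ord_copy"
  show "(x < y) = (x \<le> y \<and> \<not> y \<le> x)" by (simp add: less_eq_ord_copy_def less_ord_copy_def) linarith
  show "x \<le> x" by (simp add: less_eq_ord_copy_def)
  show "x \<le> y \<Longrightarrow> y \<le> z \<Longrightarrow> x \<le> z" by (simp add: less_eq_ord_copy_def)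
  show "x \<le> y \<Longrightarrow> y \<le> x \<Longrightarrow> x = y"
    by (simp add: less_eq_ord_copy_def flip: to_nat_Rep_ord_copy_inject)
  show "x \<le> y \<or> y \<le> x" by (simp add: less_eq_ord_copy_def) linarith
qed
end

instance ord_copy :: (finite) finite
proof
  have "(UNIV :: 'a ord_copy set) = Abs_ord_copy ` UNIV"
    by (metis type_definition.Abs_image type_definition_ord_copy)
  then show "finite (UNIV :: 'a ord_copy set)"
    by (metis finite_class.finite_UNIV finite_imageI)
qed

instance ord_copy :: (finite) wellorder
proof
  fix P :: "'a ord_copy \<Rightarrow> bool" and a
  assume step: "\<And>x. (\<And>y. y < x \<Longrightarrow> P y) \<Longrightarrow> P x"
  show "P a"
  proof (induction a rule: measure_induct_rule[of "\<lambda>x. to_nat (Rep_ord_copy x)"])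
    case (less x)
    then show ?case by (rule step) (simp add: less_ord_copy_def)
  qed
qed

lemma det_reindex_bij:
  fixes A :: "'a::comm_ring_1^'n::finite^'n" and r :: "'m::finite \<Rightarrow> 'n"
  assumes "bij r"
  shows "det (\<chi> i j. A $ r i $ r j) = det A"
proof -
  let ?conj = "\<lambda>q k. r (q (inv r k))"
  have bij_conj: "bij_betw ?conj {q. q permutes (UNIV :: 'm set)} {p. p permutes (UNIV :: 'n set)}"
    using bij_betw_permutations[of r UNIV UNIV] assms by (simp add: bij_betw_def)
  have "det (\<chi> i j. A $ r i $ r j)
      = (\<Sum>q | q permutes UNIV. of_int (sign q) * (\<Prod>i\<in>UNIV. A $ r i $ r (q i)))"
    by (simp add: det_def)
  also have "\<dots> = (\<Sum>q | q permutes UNIV. of_int (sign (?conj q)) * (\<Prod>k\<in>UNIV. A $ k $ ?conj q k))"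
  proof (rule sum.cong[OF refl])
    fix q :: "'m \<Rightarrow> 'm" assume "q \<in> {q. q permutes UNIV}"
    then have "permutes_bij_finite q UNIV UNIV r (inv r)"
      using assms by unfold_locales (auto simp: bij_is_inj bij_betw_def)
    then have "sign (?conj q) = sign q"
      using permutes_bij_finite.sign_p' by fastforce
    moreover have "(\<Prod>i\<in>UNIV. A $ r i $ r (q i)) = (\<Prod>k\<in>UNIV. A $ k $ ?conj q k)"
      using assms by (intro prod.reindex_bij_witness[of _ "inv r" r])
        (auto simp: bij_inv_eq_iff bij_is_inj bij_is_surj surj_f_inv_f)
    ultimately show "of_int (sign q) * (\<Prod>i\<in>UNIV. A $ r i $ r (q i))
        = of_int (sign (?conj q)) * (\<Prod>k\<in>UNIV. A $ k $ ?conj q k)"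
      by simp
  qed
  also have "\<dots> = det A"
    unfolding det_def
    by (rule sum.reindex_bij_betw[OF bij_conj, of "\<lambda>p. of_int (sign p) * (\<Prod>k\<in>UNIV. A $ k $ p k)"])
  finally show ?thesis .
qed

lemma prod_Basis_vec: "(\<Prod>b\<in>(Basis :: (real^'n::finite) set). f b) = (\<Prod>i\<in>UNIV. f (axis i 1))"
proof -
  have "inj (\<lambda>i::'n. axis i (1::real))"
    by (auto simp: inj_def axis_eq_axis)
  moreover have "(Basis :: (real^'n) set) = range (\<lambda>i. axis i 1)"
    by (auto simp: Basis_vec_def)
  ultimately show ?thesis
    using prod.reindex[of "\<lambda>i::'n. axis i (1::real)" UNIV f] by simp
qed

lemma linear_relabel_coordinates: "linear (\<lambda>v::real^'n::finite. \<chi> i. v $ r i)"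
  by (rule linearI) (simp_all add: vec_eq_iff)

lemma borel_measurable_relabel_coordinates:
  "(\<lambda>v::real^'n::finite. \<chi> i. v $ r i) \<in> borel_measurable borel"
  by (intro borel_measurable_continuous_onI linear_continuous_on linear_conv_bounded_linear[THEN iffD1]
      linear_relabel_coordinates)

lemma lborel_relabel_coordinates:
  fixes r :: "'m::finite \<Rightarrow> 'n::finite"
  assumes "bij r"
  shows "distr lborel borel (\<lambda>v::real^'n. \<chi> i. v $ r i) = (lborel :: (real^'m) measure)"
proof (rule lborel_eqI[symmetric])
  let ?\<phi> = "\<lambda>v::real^'n. \<chi> i. v $ r i"
  let ?\<psi> = "\<lambda>v::real^'m. \<chi> k. v $ inv r k"
  fix l u :: "real^'m"
  assume le: "\<And>b. b \<in> Basis \<Longrightarrow> l \<bullet> b \<le> u \<bullet> b"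
  have "l $ i \<le> u $ i" for i
    using le[of "axis i 1"] by (auto simp: Basis_vec_def inner_axis)
  then have le_\<psi>: "\<forall>b\<in>Basis. ?\<psi> l \<bullet> b \<le> ?\<psi> u \<bullet> b"
    by (auto simp: Basis_vec_def inner_axis)
  have "?\<phi> -` box l u = box (?\<psi> l) (?\<psi> u)"
    using assms by (auto simp: mem_box_cart bij_inv_eq_iff) (metis bij_inv_eq_iff)+
  then have "emeasure (distr lborel borel ?\<phi>) (box l u) = emeasure lborel (box (?\<psi> l) (?\<psi> u))"
    by (simp add: emeasure_distr borel_measurable_relabel_coordinates)
  also have "\<dots> = (\<Prod>k\<in>UNIV. u $ inv r k - l $ inv r k)"
    using le_\<psi> by (simp add: emeasure_lborel_box_eq prod_Basis_vec cart_eq_inner_axis[symmetric])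
  also have "\<dots> = (\<Prod>i\<in>UNIV. u $ i - l $ i)"
    using assms by (intro arg_cong[where f=ennreal] prod.reindex_bij_witness[of _ r "inv r"])
       (auto simp: bij_is_inj bij_is_surj surj_f_inv_f)
  finally show "emeasure (distr lborel borel ?\<phi>) (box l u) = (\<Prod>b\<in>Basis. (u - l) \<bullet> b)"
    by (simp add: prod_Basis_vec cart_eq_inner_axis[symmetric])
qed simp

lemma measure_relabel_coordinates:
  fixes r :: "'m::finite \<Rightarrow> 'n::finite"
  assumes "bij r" and "S \<in> sets borel"
  shows "measure lborel ((\<lambda>v::real^'n. \<chi> i. v $ r i) ` S) = measure lborel S"
proof -
  let ?\<psi> = "\<lambda>v::real^'m. \<chi> k. v $ inv r k"
  have "(\<lambda>v::real^'n. \<chi> i. v $ r i) ` S = ?\<psi> -` S"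
    using assms(1) by (force simp: vec_eq_iff bij_is_inj bij_is_surj surj_f_inv_f image_iff)
  moreover have "measure lborel (?\<psi> -` S) = measure (distr lborel borel ?\<psi>) S"
    using assms(2) by (simp add: measure_distr borel_measurable_relabel_coordinates)
  moreover have "distr lborel borel ?\<psi> = lborel"
    using assms(1) by (simp add: lborel_relabel_coordinates bij_imp_bij_inv)
  ultimately show ?thesis by simp
qed

theorem measure_simplex:
  fixes X :: "(real^'n::finite) set" and f :: "'n \<Rightarrow> real^'n"
  assumes "finite X" "card X = Suc CARD('n)" "x0 \<in> X" "bij_betw f UNIV (X - {x0})"
  shows "measure lborel (convex hull X) = \<bar>det (\<chi> i. f i - x0)\<bar> / fact CARD('n)"
proof -
  let ?r = "Rep_ord_copy :: 'n ord_copy \<Rightarrow> 'n"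
  let ?\<phi> = "\<lambda>v::real^'n. \<chi> i. v $ ?r i"
  have bij_r: "bij ?r"
    by (metis UNIV_I bij_betw_def inj_on_def Rep_ord_copy_inject type_definition.Rep_range
        type_definition_ord_copy)
  have inj_\<phi>: "inj ?\<phi>"
    by (auto simp: inj_def vec_eq_iff) (metis Abs_ord_copy_inverse UNIV_I)
  have card_copy: "CARD('n ord_copy) = CARD('n)"
    using bij_r bij_betw_same_card by blast
  have "measure lborel (convex hull X) = measure lborel (?\<phi> ` (convex hull X))"
    using bij_r \<open>finite X\<close>
    by (simp add: measure_relabel_coordinates compact_imp_closed finite_imp_compact_convex_hull)
  also have "?\<phi> ` (convex hull X) = convex hull (?\<phi> ` X)"
    by (rule convex_hull_linear_image[OF linear_relabel_coordinates])
  also have "measure lborel \<dots>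
      = \<bar>det (\<chi> i j. (?\<phi> \<circ> f \<circ> ?r) j $ i - ?\<phi> x0 $ i)\<bar> / fact CARD('n ord_copy)"
  proof (rule content_simplex)
    show "card (?\<phi> ` X) = Suc CARD('n ord_copy)"
      using assms(2) card_copy inj_\<phi> by (simp add: card_image inj_on_subset)
    have "bij_betw ?\<phi> (X - {x0}) (?\<phi> ` (X - {x0}))"
      by (rule inj_on_imp_bij_betw[OF inj_on_subset[OF inj_\<phi>]]) simp
    then have bij_\<phi>: "bij_betw ?\<phi> (X - {x0}) (?\<phi> ` X - {?\<phi> x0})"
      by (simp add: image_set_diff[OF inj_\<phi>])
    then show "bij_betw (?\<phi> \<circ> f \<circ> ?r) UNIV (?\<phi> ` X - {?\<phi> x0})"
      using bij_betw_trans[OF bij_betw_trans[OF bij_r assms(4)] bij_\<phi>] by (simp add: comp_assoc)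
  qed (use assms in auto)
  also have "(\<chi> i j. (?\<phi> \<circ> f \<circ> ?r) j $ i - ?\<phi> x0 $ i)
      = (\<chi> i j. transpose (\<chi> i. f i - x0) $ ?r i $ ?r j)"
    by (simp add: transpose_def)
  also have "det \<dots> = det (\<chi> i. f i - x0)"
    using bij_r by (simp add: det_reindex_bij det_transpose)
  finally show ?thesis using card_copy by simp
qed

lemma abs_det_bij_rows_eq:
  fixes g h :: "'n::finite \<Rightarrow> real^'n"
  assumes g: "bij_betw g UNIV T" and h: "bij_betw h UNIV T"
  shows "\<bar>det (\<chi> i. g i)\<bar> = \<bar>det (\<chi> i. h i)\<bar>"
proof -
  define p where "p = inv_into UNIV g \<circ> h"
  have "bij_betw (inv_into UNIV g) T UNIV"
    by (rule bij_betw_inv_into[OF g])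
  then have "bij p"
    unfolding p_def using h by (rule bij_betw_trans[rotated])
  then have "p permutes UNIV"
    by (simp add: permutes_univ bij_iff)
  moreover have "h i = g (p i)" for i
    using bij_betw_apply[OF h] g by (simp add: p_def bij_betw_inv_into_right)
  ultimately have "det (\<chi> i. h i) = of_int (sign p) * det (\<chi> i. g i)"
    using det_permute_rows[of p "\<chi> i. g i"] by simp
  then show ?thesis
    by (simp add: abs_mult sign_def)
qed

lemma det_replace_row_lincomb:
  fixes a :: "'n::finite \<Rightarrow> real^'n"
  shows "det (\<chi> i. if i = j then (\<Sum>k\<in>UNIV. c k *\<^sub>R a k) else a i) = c j * det (\<chi> i. a i)"
proof -
  have "det (\<chi> i. if i = j then (\<Sum>k\<in>UNIV. (\<chi> k. c k) $ k *s row k (\<chi> i. a i)) else row i (\<chi> i. a i))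
       = (\<chi> k. c k) $ j * det (\<chi> i. a i)"
    by (rule cramer_lemma_transpose)
  then show ?thesis
    by (simp add: row_def scalar_mult_eq_scaleR cong: if_cong)
qed

lemma det_add_row_to_rows:
  fixes a :: "'n::finite \<Rightarrow> real^'n"
  assumes "j \<notin> T"
  shows "det (\<chi> i. if i = j then s else if i \<in> T then a i + s else a i) = det (\<chi> i. if i = j then s else a i)"
proof -
  have "finite T" by simp
  then show ?thesis using assms
  proof (induction T rule: finite_induct)
    case empty
    then show ?case by (simp cong: if_cong)
  next
    case (insert t T)
    define A where "A = (\<chi> i. if i = j then s else if i \<in> T then a i + s else a i)"
    have "t \<noteq> j" using insert by auto
    have "(\<chi> i. if i = j then s else if i \<in> insert t T then a i + s else a i)
        = (\<chi> k. if k = t then row t A + 1 *s row j A else row k A)"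
      using insert \<open>t \<noteq> j\<close> by (auto simp: A_def vec_eq_iff row_def)
    then show ?case
      using det_row_operation[OF \<open>t \<noteq> j\<close>, of A 1] insert by (simp add: A_def)
  qed
qed

lemma det_add_lincomb_to_rows:
  fixes a :: "'n::finite \<Rightarrow> real^'n"
  shows "det (\<chi> i. a i + (\<Sum>k\<in>UNIV. c k *\<^sub>R a k)) = (1 + sum c UNIV) * det (\<chi> i. a i)"
proof -
  define s where "s = (\<Sum>k\<in>UNIV. c k *\<^sub>R a k)"
  have "det (\<chi> i. if i \<in> T then a i + s else a i) = (1 + sum c T) * det (\<chi> i. a i)" for T
  proof -
    have "finite T" by simp
    then show ?thesis
    proof (induction T rule: finite_induct)
      case empty
      then show ?case by simp
    next
      case (insert j T)
      have "det (\<chi> i. if i \<in> insert j T then a i + s else a i)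
          = det (\<chi> i. if i = j then a i + s else (if i \<in> T then a i + s else a i))"
        by (metis insert_iff)
      also have "\<dots> = det (\<chi> i. if i = j then a i else (if i \<in> T then a i + s else a i))
                    + det (\<chi> i. if i = j then s else (if i \<in> T then a i + s else a i))"
        by (rule det_row_add)
      also have "(\<chi> i. if i = j then a i else (if i \<in> T then a i + s else a i))
               = (\<chi> i. if i \<in> T then a i + s else a i)"
        using insert by (auto simp: vec_eq_iff)
      also have "det (\<chi> i. if i = j then s else (if i \<in> T then a i + s else a i))
               = det (\<chi> i. if i = j then s else a i)"
        by (rule det_add_row_to_rows) (use insert in auto)
      also have "\<dots> = c j * det (\<chi> i. a i)"
        unfolding s_def by (rule det_replace_row_lincomb)
      finally show ?case
        using insert by (simp add: algebra_simps)
    qed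
  qed
  from this[of UNIV] show ?thesis
    by (simp add: s_def)
qed

lemma orthogonal_to_rows_eq_0:
  fixes a :: "'n::finite \<Rightarrow> real^'n"
  assumes "det (\<chi> i. a i) \<noteq> 0" and "\<And>i. z \<bullet> a i = 0"
  shows "z = 0"
proof -
  have "inj ((*v) (\<chi> i. a i))"
    using assms(1) det_nz_iff_inj[of "(*v) (\<chi> i. a i)"] by (simp add: matrix_vector_mul_linear)
  moreover have "(\<chi> i. a i) *v z = (\<chi> i. a i) *v 0"
    using assms(2) by (simp add: vec_eq_iff matrix_vector_mul_component inner_commute)
  ultimately show ?thesis
    by (rule injD)
qed

lemma det_eq_0_imp_rows_dependent:
  fixes a :: "'n::finite \<Rightarrow> real^'n"
  assumes "det (\<chi> i. a i) = 0"
  obtains z :: "real^'n" where "z \<noteq> 0" and "(\<Sum>i\<in>UNIV. z $ i *\<^sub>R a i) = 0"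
proof -
  let ?A = "transpose (\<chi> i. a i)"
  have "\<not> inj ((*v) ?A)"
    using assms det_nz_iff_inj[of "(*v) ?A"] by (simp add: matrix_vector_mul_linear det_transpose)
  then obtain z1 z2 where "z1 \<noteq> z2" "?A *v z1 = ?A *v z2"
    by (auto simp: inj_def)
  then have "z1 - z2 \<noteq> 0" "?A *v (z1 - z2) = 0"
    by (simp_all add: matrix_vector_mult_diff_distrib)
  moreover have "row i (\<chi> k. a k) = a i" for i
    by (simp add: row_def vec_eq_iff)
  then have "?A *v z = (\<Sum>i\<in>UNIV. z $ i *\<^sub>R a i)" for z
    unfolding matrix_mult_sum by (simp add: scalar_mult_eq_scaleR column_transpose)
  ultimately show ?thesis
    using that by metis
qed

lemma det_Rats:
  assumes "\<And>i. rat_vec (a i)"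
  shows "det (\<chi> i. a i) \<in> \<rat>"
  using assms unfolding det_def rat_vec_def by (auto intro!: Rats_sum Rats_mult Rats_prod)

lemma Ints_inner_int_vec: "int_vec a \<Longrightarrow> int_vec b \<Longrightarrow> a \<bullet> b \<in> \<int>"
  unfolding inner_vec_def int_vec_def by (auto intro!: Ints_sum Ints_mult)

lemma Rats_common_denominator:
  "finite A \<Longrightarrow> A \<subseteq> \<rat> \<Longrightarrow> \<exists>k::nat. k \<ge> 1 \<and> (\<forall>x\<in>A. real k * (x::real) \<in> \<int>)"
proof (induction A rule: finite_induct)
  case empty
  then show ?case by auto
next
  case (insert a A)
  then obtain k where k: "k \<ge> 1" "\<forall>x\<in>A. real k * x \<in> \<int>"
    by auto
  obtain m n where mn: "n \<noteq> 0" "\<bar>a\<bar> = real m / real n"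
    using insert.prems Rats_abs_nat_div_natE by (metis insert_subset)
  then have "real n * a = real m \<or> real n * a = - real m"
    by (cases "a \<ge> 0") (auto simp: field_simps)
  then have "real n * a \<in> \<int>"
    by (metis Ints_minus Ints_of_nat)
  have "real (k * n) * x \<in> \<int>" if "x \<in> insert a A" for x
  proof (cases "x = a")
    case True
    have "real (k * n) * x = real k * (real n * a)"
      using True by simp
    then show ?thesis
      using \<open>real n * a \<in> \<int>\<close> by (metis Ints_mult Ints_of_nat)
  next
    case False
    have "real (k * n) * x = real n * (real k * x)"
      by simp
    then show ?thesis
      using False that k(2) by (metis Ints_mult Ints_of_nat insertE)
  qed
  then show ?case
    using k(1) mn(1) by (intro exI[of _ "k * n"]) (simp add: Suc_le_eq)
qed

lemma gQ_scales_to_int_vec: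
  assumes "finite (verts S)" "\<forall>v\<in>verts S. rat_vec v"
  shows "gQ S \<ge> 1" "\<forall>v\<in>verts S. int_vec (real (gQ S) *\<^sub>R v)"
proof -
  let ?A = "(\<lambda>(v, i). v $ i) ` (verts S \<times> UNIV)"
  have "?A \<subseteq> \<rat>"
    using assms(2) by (auto simp: rat_vec_def)
  then obtain k :: nat where "k \<ge> 1" "\<forall>x\<in>?A. real k * x \<in> \<int>"
    using Rats_common_denominator[of ?A] assms(1) by auto
  then have "k \<ge> 1 \<and> (\<forall>v\<in>verts S. int_vec (real k *\<^sub>R v))"
    by (auto simp: int_vec_def)
  then have "gQ S \<ge> 1 \<and> (\<forall>v\<in>verts S. int_vec (real (gQ S) *\<^sub>R v))"
    unfolding gQ_def by (rule LeastI)
  then show "gQ S \<ge> 1" "\<forall>v\<in>verts S. int_vec (real (gQ S) *\<^sub>R v)"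
    by auto
qed

lemma gorenstein_dual_eq: "dual (dual S) = S \<Longrightarrow> gorenstein (dual S) = gorenstein S"
  by (simp add: gorenstein_def)

lemma mem_dual_convex_hull: "z \<in> dual (convex hull W) \<longleftrightarrow> (\<forall>x\<in>W. -1 \<le> z \<bullet> x)"
proof
  assume "\<forall>x\<in>W. -1 \<le> z \<bullet> x"
  then have "convex hull W \<subseteq> {v. -1 \<le> z \<bullet> v}"
    by (intro hull_minimal convex_halfspace_ge) auto
  then show "z \<in> dual (convex hull W)"
    by (auto simp: dual_def)
qed (auto simp: dual_def intro: hull_inc)

lemma convex_dual: "convex (dual S)"
proof -
  have "dual S = (\<Inter>v\<in>S. {u. -1 \<le> v \<bullet> u})"
    by (auto simp: dual_def inner_commute)
  then show ?thesis
    by (simp add: convex_INT convex_halfspace_ge)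
qed

lemma real_nat_floor_Ints: "y \<in> \<int> \<Longrightarrow> 0 \<le> y \<Longrightarrow> real (nat \<lfloor>y\<rfloor>) = y"
  by (elim Ints_cases) simp

definition is_primitive_factor :: "('a \<Rightarrow> real) \<Rightarrow> 'a set \<Rightarrow> real \<Rightarrow> bool" where
  "is_primitive_factor q V l \<longleftrightarrow> l \<in> \<rat> \<and> l > 0 \<and>
     (\<exists>c :: 'a \<Rightarrow> nat. (\<forall>v\<in>V. c v > 0 \<and> q v = l * real (c v)) \<and> Gcd (c ` V) = 1)"

definition primitive_factor :: "('a \<Rightarrow> real) \<Rightarrow> 'a set \<Rightarrow> real" where
  "primitive_factor q V = (THE l. is_primitive_factor q V l)"

lemma lam_eq_primitive_factor: "lam S = primitive_factor (weight S) (verts S)"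
  by (simp add: lam_def primitive_factor_def is_primitive_factor_def)

lemma is_primitive_factor_unique:
  assumes "V \<noteq> {}" "is_primitive_factor q V l" "is_primitive_factor q V l'"
  shows "l = l'"
proof -
  obtain c c' :: "'a \<Rightarrow> nat" where
    c: "\<forall>v\<in>V. c v > 0 \<and> q v = l * real (c v)" "Gcd (c ` V) = 1" and
    c': "\<forall>v\<in>V. c' v > 0 \<and> q v = l' * real (c' v)" "Gcd (c' ` V) = 1" and
    l: "l \<in> \<rat>" "l > 0" "l' \<in> \<rat>" "l' > 0"
    using assms(2,3) unfolding is_primitive_factor_def by blast
  obtain p q :: nat where pq: "q \<noteq> 0" "\<bar>l / l'\<bar> = real p / real q" "coprime p q"
    using Rats_abs_nat_div_natE[of "l / l'"] l by (metis Rats_divide)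
  have key: "p * c v = q * c' v" if "v \<in> V" for v
  proof -
    have "l * real (c v) = l' * real (c' v)"
      using c c' that by auto
    moreover have "l = l' * real p / real q"
      using pq l by (simp add: field_simps)
    ultimately have "l' * (real p * real (c v)) = l' * (real q * real (c' v))"
      using pq(1) by (simp add: field_simps)
    then have "real p * real (c v) = real q * real (c' v)"
      using l by simp
    then show ?thesis
      by (metis of_nat_eq_iff of_nat_mult)
  qed
  have "p dvd c' v" "q dvd c v" if "v \<in> V" for v
    using key[OF that] coprime_dvd_mult_right_iff[OF pq(3)]
      coprime_dvd_mult_right_iff[OF pq(3)[unfolded coprime_commute[of p]]]
    by (metis dvd_triv_left)+
  then have "p dvd Gcd (c' ` V)" "q dvd Gcd (c ` V)"
    by (auto intro!: Gcd_greatest)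
  then have "p = 1" "q = 1"
    using c(2) c'(2) by simp_all
  then show ?thesis
    using pq l by simp
qed

lemma is_primitive_factor_exists:
  assumes "finite V" "V \<noteq> {}" "\<forall>x\<in>V. q x \<in> \<rat> \<and> q x > 0"
  shows "\<exists>l. is_primitive_factor q V l"
proof -
  obtain k :: nat where k: "k \<ge> 1" "\<forall>x\<in>V. real k * q x \<in> \<int>"
    using Rats_common_denominator[of "q ` V"] assms by auto
  define m where "m x = nat \<lfloor>real k * q x\<rfloor>" for x
  have m: "real (m x) = real k * q x" "m x > 0" if "x \<in> V" for x
  proof -
    have "real k * q x \<in> \<int>"
      using k(2) that by blast
    then obtain z where z: "real k * q x = of_int z"
      by (rule Ints_cases)
    moreover have "real k * q x > 0"
      using k(1) assms(3) that by simp
    ultimately show "real (m x) = real k * q x" "m x > 0"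
      unfolding m_def by simp_all
  qed
  define G where "G = Gcd (m ` V)"
  have "G \<noteq> 0"
    using m(2) assms(2) by (fastforce simp: G_def Gcd_0_iff)
  define c where "c x = m x div G" for x
  have mc: "m x = G * c x" if "x \<in> V" for x
    using that by (simp add: c_def G_def Gcd_dvd)
  have "G = G * Gcd (c ` V)"
  proof -
    have "m ` V = (*) G ` (c ` V)"
      using mc by (auto simp: image_iff)
    then have "Gcd (m ` V) = G * Gcd (c ` V)"
      by (simp add: Gcd_mult)
    then show ?thesis
      by (simp only: flip: G_def)
  qed
  then have "Gcd (c ` V) = 1"
    using \<open>G \<noteq> 0\<close> by simp
  moreover have "c x > 0 \<and> q x = real G / real k * real (c x)" if "x \<in> V" for x
    using m[OF that] mc[OF that] k by (auto simp: field_simps)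
  ultimately have "is_primitive_factor q V (real G / real k)"
    using \<open>G \<noteq> 0\<close> k unfolding is_primitive_factor_def by auto
  then show ?thesis ..
qed

lemma primitive_factor_eqI:
  assumes "V \<noteq> {}" and "is_primitive_factor q V l"
  shows "primitive_factor q V = l"
  unfolding primitive_factor_def
  by (rule the_equality[where P = "is_primitive_factor q V", OF assms(2)])
     (rule is_primitive_factor_unique[OF assms(1) _ assms(2)])

lemma primitive_factor:
  assumes "finite V" "V \<noteq> {}" "\<forall>x\<in>V. q x \<in> \<rat> \<and> q x > 0"
  shows "is_primitive_factor q V (primitive_factor q V)"
proof -
  obtain l where "is_primitive_factor q V l"
    using is_primitive_factor_exists[OF assms] ..
  then show ?thesis
    using primitive_factor_eqI[OF assms(2)] by simp
qed

lemma primitive_factor_reindex_scale: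
  assumes V: "finite V" "V \<noteq> {}" "\<forall>x\<in>V. q x \<in> \<rat> \<and> q x > 0"
    and h: "bij_betw h V W" and K: "K \<in> \<rat>" "K > 0" and q': "\<forall>x\<in>V. q' (h x) = K * q x"
  shows "primitive_factor q' W = K * primitive_factor q V"
proof (rule primitive_factor_eqI)
  let ?l = "primitive_factor q V"
  obtain c :: "'a \<Rightarrow> nat" where
    c: "\<forall>v\<in>V. c v > 0 \<and> q v = ?l * real (c v)" "Gcd (c ` V) = 1" and l: "?l \<in> \<rat>" "?l > 0"
    using primitive_factor[OF V] unfolding is_primitive_factor_def by blast
  define c' where "c' = c \<circ> inv_into V h"
  have c'h: "c' (h x) = c x" if "x \<in> V" for x
    using h that by (simp add: c'_def bij_betw_inv_into_left)
  have W: "W = h ` V"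
    using h by (simp add: bij_betw_def)
  have "c' ` W = c ` V"
    using c'h by (force simp: W image_iff)
  then have "Gcd (c' ` W) = 1"
    using c(2) by simp
  moreover have "\<forall>y\<in>W. c' y > 0 \<and> q' y = K * ?l * real (c' y)"
    using c c'h q' by (auto simp: W)
  moreover have "K * ?l \<in> \<rat>" "K * ?l > 0"
    using K l by simp_all
  ultimately show "is_primitive_factor q' W (K * ?l)"
    unfolding is_primitive_factor_def by blast
  show "W \<noteq> {}"
    using V(2) W by simp
qed

lemma Lcm_eq_of_coprime_cofactors:
  fixes \<alpha> c :: "'a \<Rightarrow> nat"
  assumes "\<forall>x\<in>V. \<alpha> x * c x = N" and "Gcd (c ` V) = 1"
  shows "Lcm (\<alpha> ` V) = N"
proof (rule dvd_antisym)
  have "\<alpha> x dvd N" if "x \<in> V" for x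
    using assms(1) that by (metis dvd_triv_left)
  then show "Lcm (\<alpha> ` V) dvd N"
    by (auto intro!: Lcm_least)
  have "N dvd Lcm (\<alpha> ` V) * c x" if "x \<in> V" for x
  proof -
    have "N = \<alpha> x * c x"
      using assms(1) that by simp
    then show ?thesis
      using that by (simp add: mult_dvd_mono dvd_Lcm)
  qed
  then have "N dvd Gcd ((*) (Lcm (\<alpha> ` V)) ` c ` V)"
    by (auto intro!: Gcd_greatest)
  then show "N dvd Lcm (\<alpha> ` V)"
    by (simp add: Gcd_mult assms(2))
qed

lemma real_Lcm_eq_div_primitive_factor:
  assumes V: "finite V" "V \<noteq> {}" "\<forall>x\<in>V. q x \<in> \<rat> \<and> q x > 0"
    and \<alpha>: "\<forall>x\<in>V. real (\<alpha> x) = g / q x"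
  shows "real (Lcm (\<alpha> ` V)) = g / primitive_factor q V"
proof -
  let ?l = "primitive_factor q V"
  obtain c :: "'a \<Rightarrow> nat" where
    c: "\<forall>v\<in>V. c v > 0 \<and> q v = ?l * real (c v)" "Gcd (c ` V) = 1" and l: "?l > 0"
    using primitive_factor[OF V] unfolding is_primitive_factor_def by blast
  have prod: "real (\<alpha> x) * real (c x) = g / ?l" if "x \<in> V" for x
    using \<alpha> c(1) l that by (auto simp: field_simps)
  obtain x0 where "x0 \<in> V"
    using V(2) by blast
  have "\<alpha> x * c x = \<alpha> x0 * c x0" if "x \<in> V" for x
    using prod[OF that] prod[OF \<open>x0 \<in> V\<close>] by (metis of_nat_eq_iff of_nat_mult)
  then have "Lcm (\<alpha> ` V) = \<alpha> x0 * c x0"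
    using c(2) by (blast intro: Lcm_eq_of_coprime_cofactors)
  then show ?thesis
    using prod[OF \<open>x0 \<in> V\<close>] by simp
qed

lemma weight_eq_abs_det:
  fixes g :: "'n::finite \<Rightarrow> real^'n"
  assumes "verts S = T" and "bij_betw g UNIV (T - {x})"
  shows "weight S x = \<bar>det (\<chi> i. g i)\<bar>"
proof -
  have "\<exists>F. bij_betw F (UNIV :: 'n set) (verts S - {x})"
    using assms by blast
  then have "bij_betw (SOME F. bij_betw F (UNIV :: 'n set) (verts S - {x})) UNIV (T - {x})"
    using assms(1) by (metis someI_ex)
  then show ?thesis
    unfolding weight_def Let_def using abs_det_bij_rows_eq assms(2) by blast
qed

lemma dual_convex_hull_eq:
  fixes a b :: "'i \<Rightarrow> real^'n::finite"
  assumes I: "finite I" "\<And>i. i \<in> I \<Longrightarrow> 0 < \<mu> i" "sum \<mu> I = 1" "(\<Sum>i\<in>I. \<mu> i *\<^sub>R a i) = 0"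
    and pairing: "\<And>i j. i \<in> I \<Longrightarrow> j \<in> I \<Longrightarrow> b i \<bullet> a j = (if i = j then 1 / \<mu> i else 0) - 1"
    and spanning: "\<And>z. (\<And>j. j \<in> I \<Longrightarrow> z \<bullet> a j = 0) \<Longrightarrow> z = 0"
  shows "dual (convex hull (a ` I)) = convex hull (b ` I)"
proof
  have "b i \<in> dual (convex hull (a ` I))" if "i \<in> I" for i
    using pairing[OF that] I(2)[OF that] by (auto simp: mem_dual_convex_hull less_imp_le)
  then show "convex hull (b ` I) \<subseteq> dual (convex hull (a ` I))"
    by (intro hull_minimal convex_dual) auto
next
  show "dual (convex hull (a ` I)) \<subseteq> convex hull (b ` I)"
  proof
    fix z assume "z \<in> dual (convex hull (a ` I))"
    then have z: "-1 \<le> z \<bullet> a i" if "i \<in> I" for i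
      using that by (simp add: mem_dual_convex_hull)
    define \<beta> where "\<beta> i = \<mu> i * (1 + z \<bullet> a i)" for i
    have \<beta>_nonneg: "0 \<le> \<beta> i" if "i \<in> I" for i
      using z[OF that] I(2)[OF that] by (simp add: \<beta>_def)
    have "(\<Sum>i\<in>I. \<mu> i * (z \<bullet> a i)) = z \<bullet> (\<Sum>i\<in>I. \<mu> i *\<^sub>R a i)"
      by (simp add: inner_sum_right)
    then have \<beta>_sum: "sum \<beta> I = 1"
      using I(3,4) by (simp add: \<beta>_def distrib_left sum.distrib)
    have "(\<Sum>i\<in>I. \<beta> i *\<^sub>R b i) - z = 0"
    proof (rule spanning)
      fix j assume j: "j \<in> I"
      have "(\<Sum>i\<in>I. \<beta> i * (b i \<bullet> a j)) = (\<Sum>i\<in>I. (if i = j then \<beta> i / \<mu> i else 0) - \<beta> i)"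
        using j by (intro sum.cong) (auto simp: pairing right_diff_distrib)
      also have "\<dots> = 1 + z \<bullet> a j - 1"
        using j I(1) I(2)[OF j] \<beta>_sum by (simp add: sum_subtractf \<beta>_def)
      finally show "((\<Sum>i\<in>I. \<beta> i *\<^sub>R b i) - z) \<bullet> a j = 0"
        by (simp add: inner_diff_left inner_sum_left)
    qed
    then have "z = (\<Sum>i\<in>I. \<beta> i *\<^sub>R b i)"
      by simp
    also have "\<dots> \<in> convex hull (b ` I)"
      using I(1) \<beta>_nonneg \<beta>_sum by (intro convex_sum convex_convex_hull) (auto intro: hull_inc)
    finally show "z \<in> convex hull (b ` I)" .
  qed
qed

lemma unit_fraction_partition_identities:
  fixes \<mu> :: "'a \<Rightarrow> real" and \<alpha> :: "'a \<Rightarrow> nat"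
  assumes V: "finite V" "card V = d + 1" "d \<ge> 1" and \<mu>: "\<forall>x\<in>V. \<mu> x \<in> \<rat> \<and> \<mu> x > 0"
    and g: "g > 0" and \<alpha>: "\<forall>x\<in>V. real (\<alpha> x) = g / \<mu> x"
    and K: "K * K' = (\<Prod>x\<in>V. 1 / \<mu> x)"
  defines "\<alpha>s \<equiv> image_mset \<alpha> (mset_set V)" and "l \<equiv> primitive_factor \<mu> V"
  shows "K * K' = real (prod_mset \<alpha>s) / g ^ (d + 1)"
    and "l * K * K' = real (prod_mset \<alpha>s) / (g ^ d * real (Lcm (set_mset \<alpha>s)))"
    and "l * K * (l * K') = real (prod_mset \<alpha>s) / (g ^ (d - 1) * real (Lcm (set_mset \<alpha>s)) ^ 2)"
proof -
  have "V \<noteq> {}"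
    using V(2) by auto
  have "real (prod_mset \<alpha>s) = (\<Prod>x\<in>V. g * (1 / \<mu> x))"
    using \<alpha> by (simp add: \<alpha>s_def prod_unfold_prod_mset[symmetric])
  also have "\<dots> = g ^ card V * (\<Prod>x\<in>V. 1 / \<mu> x)"
    by (simp only: prod.distrib prod_constant)
  finally have prod: "real (prod_mset \<alpha>s) = g ^ (d + 1) * (K * K')"
    using V(2) K by simp
  have Lcm: "real (Lcm (set_mset \<alpha>s)) = g / l"
    unfolding \<alpha>s_def l_def using V(1) \<open>V \<noteq> {}\<close> \<mu> \<alpha> by (simp add: real_Lcm_eq_div_primitive_factor)
  have "l > 0"
    using primitive_factor[OF V(1) \<open>V \<noteq> {}\<close> \<mu>] by (simp add: l_def is_primitive_factor_def)
  have power: "g ^ (d + 1) = g ^ (d - 1) * g ^ 2"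
    using V(3) by (simp flip: power_add)
  show "K * K' = real (prod_mset \<alpha>s) / g ^ (d + 1)"
    using g by (simp add: prod)
  show "l * K * K' = real (prod_mset \<alpha>s) / (g ^ d * real (Lcm (set_mset \<alpha>s)))"
    unfolding prod Lcm using g \<open>l > 0\<close> by (simp add: field_simps)
  show "l * K * (l * K') = real (prod_mset \<alpha>s) / (g ^ (d - 1) * real (Lcm (set_mset \<alpha>s)) ^ 2)"
    unfolding prod Lcm power using g \<open>l > 0\<close> by (simp add: field_simps power2_eq_square)
qed

locale barycentric_simplex =
  fixes V :: "(real^'n::finite) set" and w :: "real^'n" and f :: "'n \<Rightarrow> real^'n"
    and \<mu> :: "real^'n \<Rightarrow> real"
  assumes finite_V: "finite V" and card_V: "card V = Suc CARD('n)"
    and independent_V: "\<not> affine_dependent V"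
    and w_in_V: "w \<in> V" and bij_f: "bij_betw f UNIV (V - {w})"
    and mu_pos: "\<And>x. x \<in> V \<Longrightarrow> 0 < \<mu> x" and sum_mu: "sum \<mu> V = 1"
    and barycenter_mu: "(\<Sum>x\<in>V. \<mu> x *\<^sub>R x) = 0"
begin

lemma f_in_V [simp]: "f i \<in> V" and f_neq_w [simp]: "f i \<noteq> w"
  using bij_betw_apply[OF bij_f, of i] by auto

lemma w_neq_f [simp]: "w \<noteq> f i"
  using f_neq_w by metis

lemma f_eq_iff [simp]: "f i = f j \<longleftrightarrow> i = j"
  using bij_f by (auto simp: bij_betw_def dest: injD)

lemma V_cases:
  assumes "y \<in> V"
  obtains "y = w" | i where "y = f i"
  using assms bij_f by (auto simp: bij_betw_def)

lemma sum_V: "(\<Sum>x\<in>V. g x) = g w + (\<Sum>i\<in>UNIV. g (f i))"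
  using sum.remove[OF finite_V w_in_V, of g] sum.reindex_bij_betw[OF bij_f, of g] by simp

lemma prod_V: "(\<Prod>x\<in>V. g x) = g w * (\<Prod>i\<in>UNIV. g (f i))"
  using prod.remove[OF finite_V w_in_V, of g] prod.reindex_bij_betw[OF bij_f, of g] by simp

lemma mu_w_pos: "0 < \<mu> w"
  using mu_pos w_in_V by blast

lemma one_plus_sum_mu_ratio: "1 + (\<Sum>k\<in>UNIV. \<mu> (f k) / \<mu> w) = 1 / \<mu> w"
  using sum_mu sum_V[of \<mu>] mu_w_pos by (simp add: field_simps flip: sum_divide_distrib)

lemma eliminate_w:
  fixes h :: "real^'n \<Rightarrow> 'a::real_vector"
  assumes "(\<Sum>x\<in>V. \<mu> x *\<^sub>R h x) = 0"
  shows "h w = (\<Sum>k\<in>UNIV. (- (\<mu> (f k) / \<mu> w)) *\<^sub>R h (f k))"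
proof -
  have sum_eq: "\<mu> w *\<^sub>R h w = - (\<Sum>k\<in>UNIV. \<mu> (f k) *\<^sub>R h (f k))"
    using assms sum_V[of "\<lambda>x. \<mu> x *\<^sub>R h x"] by (simp add: eq_neg_iff_add_eq_0)
  have "h w = (1 / \<mu> w) *\<^sub>R (\<mu> w *\<^sub>R h w)"
    using mu_w_pos by simp
  also have "\<dots> = (\<Sum>k\<in>UNIV. (- (\<mu> (f k) / \<mu> w)) *\<^sub>R h (f k))"
    unfolding sum_eq by (simp add: scaleR_sum_right flip: sum_negf)
  finally show ?thesis .
qed

lemma w_as_lincomb: "w = (\<Sum>k\<in>UNIV. (- (\<mu> (f k) / \<mu> w)) *\<^sub>R f k)"
  by (rule eliminate_w[of id, unfolded id_apply, OF barycenter_mu])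

lemma det_edges:
  assumes "(\<Sum>x\<in>V. \<mu> x *\<^sub>R h x) = 0"
  shows "det (\<chi> i. h (f i) - h w) = det (\<chi> i. h (f i)) / \<mu> w"
proof -
  have "(\<chi> i. h (f i) - h w) = (\<chi> i. h (f i) + (\<Sum>k\<in>UNIV. (\<mu> (f k) / \<mu> w) *\<^sub>R h (f k)))"
    by (subst eliminate_w[OF assms]) (simp add: sum_negf)
  then show ?thesis
    using mu_w_pos by (simp add: det_add_lincomb_to_rows one_plus_sum_mu_ratio)
qed

lemma det_vertices_nonzero: "det (\<chi> i. f i) \<noteq> 0"
proof
  assume "det (\<chi> i. f i) = 0"
  then have "det (\<chi> i. f i - w) = 0"
    using det_edges[of id] barycenter_mu by simp
  then obtain z where z: "z \<noteq> 0" "(\<Sum>i\<in>UNIV. z $ i *\<^sub>R (f i - w)) = 0"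
    by (rule det_eq_0_imp_rows_dependent)
  then obtain i0 where "z $ i0 \<noteq> 0"
    by (auto simp: vec_eq_iff)
  define a where "a y = (if y = w then - (\<Sum>i\<in>UNIV. z $ i) else z $ (inv f y))" for y
  have a_f: "a (f i) = z $ i" for i
    using bij_f by (simp add: a_def bij_betw_def)
  have a_w: "a w = - (\<Sum>i\<in>UNIV. z $ i)"
    by (simp add: a_def)
  have "sum a V = 0"
    using sum_V[of a] by (simp add: a_f a_w)
  moreover have "(\<Sum>y\<in>V. a y *\<^sub>R y) = 0"
    using sum_V[of "\<lambda>y. a y *\<^sub>R y"] z(2)
    by (simp add: a_f a_w scaleR_diff_right sum_subtractf scaleR_sum_left)
  moreover have "\<exists>v\<in>V. a v \<noteq> 0"
    using \<open>z $ i0 \<noteq> 0\<close> a_f f_in_V by metis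
  ultimately show False
    using independent_V affine_dependent_explicit_finite[OF finite_V] by blast
qed

lemma measure_convex_hull: "measure lborel (convex hull V) = \<bar>det (\<chi> i. f i)\<bar> / \<mu> w / fact CARD('n)"
  using measure_simplex[OF finite_V card_V w_in_V bij_f] det_edges[of id] barycenter_mu mu_w_pos
  by (simp add: abs_div)

lemma Vol_convex_hull: "Vol (convex hull V) = \<bar>det (\<chi> i. f i)\<bar> / \<mu> w"
  by (simp add: Vol_def measure_convex_hull)

lemma Vol_pos: "Vol (convex hull V) > 0"
  using det_vertices_nonzero mu_w_pos by (simp add: Vol_convex_hull)

lemma verts_convex_hull: "verts (convex hull V) = V"
  using extreme_point_of_convex_hull_affine_independent[OF independent_V] by (auto simp: verts_def)

definition enum_omit :: "'n \<Rightarrow> 'n \<Rightarrow> real^'n" where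
  "enum_omit j i = (if i = j then w else f i)"

lemma bij_enum_omit: "bij_betw (enum_omit j) UNIV (V - {f j})"
proof -
  have "inj (enum_omit j)"
    by (auto simp: inj_def enum_omit_def)
  moreover have "range (enum_omit j) = V - {f j}"
    using w_in_V by (auto simp: enum_omit_def elim: V_cases)
  ultimately show ?thesis
    by (simp add: bij_betw_def)
qed

lemma det_enum_omit: "det (\<chi> i. enum_omit j i) = - (\<mu> (f j) / \<mu> w) * det (\<chi> i. f i)"
proof -
  define W where "W = (\<Sum>k\<in>UNIV. (- (\<mu> (f k) / \<mu> w)) *\<^sub>R f k)"
  have "w = W"
    unfolding W_def by (rule w_as_lincomb)
  then have "det (\<chi> i. enum_omit j i) = det (\<chi> i. if i = j then W else f i)"
    unfolding enum_omit_def by (rule arg_cong[where f = "\<lambda>t. det (\<chi> i. if i = j then t else f i)"])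
  also have "\<dots> = - (\<mu> (f j) / \<mu> w) * det (\<chi> i. f i)"
    unfolding W_def by (rule det_replace_row_lincomb)
  finally show ?thesis .
qed

lemma weight_vertex:
  assumes "x \<in> V"
  shows "weight (convex hull V) x = \<mu> x * Vol (convex hull V)"
  using assms
proof (cases rule: V_cases)
  case 1
  then show ?thesis
    using weight_eq_abs_det[OF verts_convex_hull bij_f] mu_w_pos by (simp add: Vol_convex_hull)
next
  case (2 j)
  then show ?thesis
    using weight_eq_abs_det[OF verts_convex_hull bij_enum_omit] det_enum_omit mu_pos[of "f j"] mu_w_pos
    by (simp add: Vol_convex_hull abs_mult)
qed

lemma weight_sum_convex_hull: "weight_sum (convex hull V) = Vol (convex hull V)"
  using sum_mu
  by (simp add: weight_sum_def verts_convex_hull weight_vertex flip: sum_distrib_right)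

lemma ufp_convex_hull:
  "ufp (convex hull V) = image_mset (\<lambda>x. real (gorenstein (convex hull V)) / \<mu> x) (mset_set V)"
  unfolding ufp_def verts_convex_hull weight_sum_convex_hull
  using finite_V Vol_pos by (intro image_mset_cong) (simp add: weight_vertex)

context
  assumes rational_V: "\<forall>v\<in>V. rat_vec v"
begin

lemma mu_ratio_rat: "\<mu> (f j) / \<mu> w \<in> \<rat>"
proof -
  have "det (\<chi> i. enum_omit j i) \<in> \<rat>" "det (\<chi> i. f i) \<in> \<rat>"
    using rational_V w_in_V by (auto intro!: det_Rats simp: enum_omit_def)
  then have "- det (\<chi> i. enum_omit j i) / det (\<chi> i. f i) \<in> \<rat>"
    by simp
  then show ?thesis
    using det_vertices_nonzero by (simp add: det_enum_omit)
qed

lemma mu_rat: "x \<in> V \<Longrightarrow> \<mu> x \<in> \<rat>"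
proof -
  have "1 + (\<Sum>k\<in>UNIV. \<mu> (f k) / \<mu> w) \<in> \<rat>"
    using mu_ratio_rat by (intro Rats_add Rats_1 Rats_sum)
  then have "1 / \<mu> w \<in> \<rat>"
    by (simp only: one_plus_sum_mu_ratio)
  then have mu_w: "\<mu> w \<in> \<rat>"
    by (metis Rats_inverse inverse_eq_divide inverse_inverse_eq)
  moreover have "\<mu> (f j) = \<mu> (f j) / \<mu> w * \<mu> w" for j
    using mu_w_pos by simp
  ultimately show "x \<in> V \<Longrightarrow> \<mu> x \<in> \<rat>"
    using mu_ratio_rat by (metis Rats_mult V_cases)
qed

lemma Vol_rat: "Vol (convex hull V) \<in> \<rat>"
proof -
  have "det (\<chi> i. f i) \<in> \<rat>"
    using rational_V by (intro det_Rats) auto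
  then show ?thesis
    using mu_rat[OF w_in_V] by (auto intro: Rats_divide Rats_abs_iff[THEN iffD2] simp: Vol_convex_hull)
qed

lemma lam_convex_hull: "lam (convex hull V) = Vol (convex hull V) * primitive_factor \<mu> V"
  unfolding lam_eq_primitive_factor verts_convex_hull
  using finite_V w_in_V mu_rat mu_pos Vol_rat Vol_pos weight_vertex
  by (intro primitive_factor_reindex_scale[where h = id]) auto

end

(* dual_vertex x is the vertex of the dual simplex dual to the facet opposite x: it pairs to -1
   with every other vertex. *)
definition dual_pairing :: "real^'n \<Rightarrow> real^'n \<Rightarrow> real" where
  "dual_pairing x y = (if x = y then 1 / \<mu> x else 0) - 1"

definition dual_vertex :: "real^'n \<Rightarrow> real^'n" where
  "dual_vertex x = (THE z. (\<chi> i. f i) *v z = (\<chi> i. dual_pairing x (f i)))"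

lemma dual_pairing_commute: "dual_pairing x y = dual_pairing y x"
  by (simp add: dual_pairing_def)

lemma sum_dual_pairing:
  assumes "y \<in> V"
  shows "(\<Sum>x\<in>V. c x * dual_pairing x y) = c y / \<mu> y - sum c V"
proof -
  have "(\<Sum>x\<in>V. c x * dual_pairing x y) = (\<Sum>x\<in>V. (if x = y then c x / \<mu> x else 0) - c x)"
    by (intro sum.cong) (auto simp: dual_pairing_def right_diff_distrib)
  then show ?thesis
    using assms finite_V by (simp add: sum_subtractf)
qed

lemma mult_dual_vertex: "(\<chi> i. f i) *v dual_vertex x = (\<chi> i. dual_pairing x (f i))"
proof -
  have "\<exists>!z. (\<chi> i. f i) *v z = (\<chi> i. dual_pairing x (f i))"
    using cramer[OF det_vertices_nonzero] by auto
  then show ?thesis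
    unfolding dual_vertex_def by (rule theI')
qed

lemma inner_dual_vertex_f: "dual_vertex x \<bullet> f i = dual_pairing x (f i)"
  using arg_cong[OF mult_dual_vertex, of "\<lambda>v. v $ i"]
  by (simp add: matrix_vector_mul_component inner_commute)

lemma inner_dual_vertex:
  assumes "x \<in> V" "y \<in> V"
  shows "dual_vertex x \<bullet> y = dual_pairing x y"
  using assms(2)
proof (cases rule: V_cases)
  case 1
  have "(\<Sum>y\<in>V. \<mu> y * dual_pairing x y) = 0"
    using sum_dual_pairing[OF assms(1), of \<mu>] sum_mu mu_pos[OF assms(1)]
    by (simp add: dual_pairing_commute)
  then have "(\<Sum>k\<in>UNIV. \<mu> (f k) * dual_pairing x (f k)) = - \<mu> w * dual_pairing x w"
    using sum_V[of "\<lambda>y. \<mu> y * dual_pairing x y"] by simp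
  moreover have "dual_vertex x \<bullet> w = dual_vertex x \<bullet> (\<Sum>k\<in>UNIV. (- (\<mu> (f k) / \<mu> w)) *\<^sub>R f k)"
    using w_as_lincomb by (rule arg_cong)
  then have "dual_vertex x \<bullet> w = (\<Sum>k\<in>UNIV. - (\<mu> (f k) / \<mu> w) * dual_pairing x (f k))"
    by (simp add: inner_sum_right inner_dual_vertex_f)
  ultimately show ?thesis
    using 1 mu_w_pos by (simp add: sum_divide_distrib[symmetric] sum_negf)
qed (simp add: inner_dual_vertex_f)

lemma inner_dual_vertex_left: "x \<in> V \<Longrightarrow> y \<in> V \<Longrightarrow> y \<bullet> dual_vertex x = dual_pairing x y"
  by (metis inner_commute inner_dual_vertex)

lemma orthogonal_vertices_eq_0: "(\<And>y. y \<in> V \<Longrightarrow> z \<bullet> y = 0) \<Longrightarrow> z = 0"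
  using orthogonal_to_rows_eq_0[OF det_vertices_nonzero] by simp

lemma barycenter_dual: "(\<Sum>x\<in>V. \<mu> x *\<^sub>R dual_vertex x) = 0"
proof (rule orthogonal_vertices_eq_0)
  fix y assume "y \<in> V"
  then have "(\<Sum>x\<in>V. \<mu> x * (dual_vertex x \<bullet> y)) = 0"
    using sum_dual_pairing[of y \<mu>] mu_pos[of y] sum_mu by (simp add: inner_dual_vertex)
  then show "(\<Sum>x\<in>V. \<mu> x *\<^sub>R dual_vertex x) \<bullet> y = 0"
    by (simp add: inner_sum_left)
qed

lemma combination_dual_eq_0:
  assumes "sum c V = 0" and "(\<Sum>x\<in>V. c x *\<^sub>R dual_vertex x) = 0" and "y \<in> V"
  shows "c y = 0"
proof -
  have "(\<Sum>x\<in>V. c x *\<^sub>R dual_vertex x) \<bullet> y = c y / \<mu> y"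
    using sum_dual_pairing[OF assms(3), of c] assms(1,3) by (simp add: inner_sum_left inner_dual_vertex)
  then show ?thesis
    using assms(2,3) mu_pos[of y] by simp
qed

lemma inj_on_dual_vertex: "inj_on dual_vertex V"
proof (rule inj_onI)
  fix x y assume xy: "x \<in> V" "y \<in> V" "dual_vertex x = dual_vertex y"
  show "x = y"
  proof (rule ccontr)
    assume "x \<noteq> y"
    then have "dual_vertex y \<bullet> x = -1"
      using xy(1,2) by (simp add: inner_dual_vertex dual_pairing_def)
    moreover have "dual_vertex x \<bullet> x = 1 / \<mu> x - 1"
      using xy(1) by (simp add: inner_dual_vertex dual_pairing_def)
    ultimately have "1 / \<mu> x - 1 = -1"
      using xy(3) by metis
    then show False
      using mu_pos[OF xy(1)] by simp
  qed
qed

lemma sum_dual_vertices: "(\<Sum>y\<in>dual_vertex ` V. g y) = (\<Sum>x\<in>V. g (dual_vertex x))"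
  by (rule sum.reindex[OF inj_on_dual_vertex, unfolded comp_def])

lemma independent_dual: "\<not> affine_dependent (dual_vertex ` V)"
proof
  have "finite (dual_vertex ` V)"
    using finite_V by simp
  moreover assume "affine_dependent (dual_vertex ` V)"
  ultimately obtain a where a: "sum a (dual_vertex ` V) = 0" "\<exists>v\<in>dual_vertex ` V. a v \<noteq> 0"
    "(\<Sum>v\<in>dual_vertex ` V. a v *\<^sub>R v) = 0"
    by (auto simp: affine_dependent_explicit_finite)
  have "a (dual_vertex y) = 0" if "y \<in> V" for y
  proof (rule combination_dual_eq_0[where c = "\<lambda>x. a (dual_vertex x)", OF _ _ that])
    show "(\<Sum>x\<in>V. a (dual_vertex x)) = 0"
      using a(1) by (simp add: sum_dual_vertices)
    show "(\<Sum>x\<in>V. a (dual_vertex x) *\<^sub>R dual_vertex x) = 0"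
      using a(3) by (simp add: sum_dual_vertices)
  qed
  then show False
    using a(2) by blast
qed

lemma det_edges_mult_det_dual: "det (\<chi> i. f i - w) * det (\<chi> i. dual_vertex (f i)) = (\<Prod>i\<in>UNIV. 1 / \<mu> (f i))"
proof -
  have "(\<chi> i. f i - w) ** transpose (\<chi> i. dual_vertex (f i)) = (\<chi> i j. if i = j then 1 / \<mu> (f j) else 0)"
  proof -
    have "((\<chi> i. f i - w) ** transpose (\<chi> i. dual_vertex (f i))) $ i $ j = (f i - w) \<bullet> dual_vertex (f j)" for i j
      by (simp add: matrix_matrix_mult_def transpose_def inner_vec_def mult.commute)
    also have "(f i - w) \<bullet> dual_vertex (f j) = (if i = j then 1 / \<mu> (f j) else 0)" for i j
      using w_in_V by (simp add: inner_diff_left inner_dual_vertex_left dual_pairing_def)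
    finally show ?thesis
      by (simp add: vec_eq_iff)
  qed
  then have "det ((\<chi> i. f i - w) ** transpose (\<chi> i. dual_vertex (f i))) = (\<Prod>i\<in>UNIV. 1 / \<mu> (f i))"
    by (simp add: det_diagonal)
  then show ?thesis
    by (simp add: det_mul det_transpose)
qed

lemma det_dual_nonzero: "det (\<chi> i. dual_vertex (f i)) \<noteq> 0"
proof -
  have "(\<Prod>i\<in>UNIV. 1 / \<mu> (f i)) > 0"
    using mu_pos[OF f_in_V] by (intro prod_pos) simp
  then have "det (\<chi> i. f i - w) * det (\<chi> i. dual_vertex (f i)) \<noteq> 0"
    by (metis det_edges_mult_det_dual less_irrefl)
  then show ?thesis
    by simp
qed

lemma orthogonal_dual_eq_0: "(\<And>x. x \<in> V \<Longrightarrow> z \<bullet> dual_vertex x = 0) \<Longrightarrow> z = 0"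
  using orthogonal_to_rows_eq_0[OF det_dual_nonzero] by simp

lemma dual_convex_hull: "dual (convex hull V) = convex hull (dual_vertex ` V)"
  using dual_convex_hull_eq[of V \<mu> id dual_vertex] finite_V mu_pos sum_mu barycenter_mu
    orthogonal_vertices_eq_0 by (simp add: inner_dual_vertex dual_pairing_def)

lemma dual_dual_convex_hull: "dual (convex hull (dual_vertex ` V)) = convex hull V"
  using dual_convex_hull_eq[of V \<mu> dual_vertex id] finite_V mu_pos sum_mu barycenter_dual
    orthogonal_dual_eq_0 by (simp add: inner_dual_vertex_left dual_pairing_def)

lemma inv_dual_vertex [simp]: "x \<in> V \<Longrightarrow> inv_into V dual_vertex (dual_vertex x) = x"
  by (rule inv_into_f_f[OF inj_on_dual_vertex])

lemma barycentric_simplex_dual: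
  "barycentric_simplex (dual_vertex ` V) (dual_vertex w) (dual_vertex \<circ> f) (\<mu> \<circ> inv_into V dual_vertex)"
proof unfold_locales
  have "bij_betw dual_vertex (V - {w}) (dual_vertex ` (V - {w}))"
    using inj_on_subset[OF inj_on_dual_vertex] by (intro inj_on_imp_bij_betw) auto
  then show "bij_betw (dual_vertex \<circ> f) UNIV (dual_vertex ` V - {dual_vertex w})"
    using bij_betw_trans[OF bij_f] inj_on_image_set_diff[OF inj_on_dual_vertex] w_in_V by auto
  show "card (dual_vertex ` V) = Suc CARD('n)"
    using card_image[OF inj_on_dual_vertex] card_V by simp
  show "sum (\<mu> \<circ> inv_into V dual_vertex) (dual_vertex ` V) = 1"
    using sum_mu by (simp add: sum_dual_vertices)
  show "(\<Sum>y\<in>dual_vertex ` V. (\<mu> \<circ> inv_into V dual_vertex) y *\<^sub>R y) = 0"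
    using barycenter_dual by (simp add: sum_dual_vertices)
qed (use finite_V independent_dual w_in_V mu_pos in auto)

lemma Vol_mult_Vol_dual:
  "Vol (convex hull V) * Vol (convex hull (dual_vertex ` V)) = (\<Prod>x\<in>V. 1 / \<mu> x)"
proof -
  interpret dual: barycentric_simplex "dual_vertex ` V" "dual_vertex w" "dual_vertex \<circ> f"
    "\<mu> \<circ> inv_into V dual_vertex"
    by (rule barycentric_simplex_dual)
  have "Vol (convex hull (dual_vertex ` V)) = \<bar>det (\<chi> i. dual_vertex (f i))\<bar> / \<mu> w"
    using dual.Vol_convex_hull w_in_V by simp
  moreover have "Vol (convex hull V) = \<bar>det (\<chi> i. f i - w)\<bar>"
    using det_edges[of id] barycenter_mu mu_w_pos by (simp add: Vol_convex_hull abs_div)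
  moreover have "\<bar>det (\<chi> i. f i - w) * det (\<chi> i. dual_vertex (f i))\<bar> = (\<Prod>i\<in>UNIV. 1 / \<mu> (f i))"
    using mu_pos[OF f_in_V] by (simp add: det_edges_mult_det_dual abs_prod less_imp_le)
  ultimately show ?thesis
    using prod_V[of "\<lambda>x. 1 / \<mu> x"] by (simp add: abs_mult)
qed

lemma gorenstein_dual: "gorenstein (convex hull (dual_vertex ` V)) = gorenstein (convex hull V)"
  using gorenstein_dual_eq[of "convex hull V"] by (simp add: dual_convex_hull dual_dual_convex_hull)

lemma ufp_dual: "ufp (convex hull (dual_vertex ` V)) = ufp (convex hull V)"
proof -
  interpret dual: barycentric_simplex "dual_vertex ` V" "dual_vertex w" "dual_vertex \<circ> f"
    "\<mu> \<circ> inv_into V dual_vertex"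
    by (rule barycentric_simplex_dual)
  have mset_dual: "mset_set (dual_vertex ` V) = image_mset dual_vertex (mset_set V)"
    by (rule image_mset_mset_set[OF inj_on_dual_vertex, symmetric])
  show ?thesis
    unfolding dual.ufp_convex_hull ufp_convex_hull gorenstein_dual mset_dual multiset.map_comp
    using finite_V by (intro image_mset_cong) simp
qed

context
  assumes rational_V: "\<forall>v\<in>V. rat_vec v"
begin

lemma rat_vec_dual_vertex:
  assumes "x \<in> V"
  shows "rat_vec (dual_vertex x)"
proof -
  have "dual_vertex x = (\<chi> k. det (\<chi> i j. if j = k then (\<chi> i. dual_pairing x (f i)) $ i else (\<chi> i. f i) $ i $ j)
      / det (\<chi> i. f i))"
    using cramer[OF det_vertices_nonzero] mult_dual_vertex by blast
  moreover have "dual_pairing x y \<in> \<rat>" for y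
    using mu_rat[OF rational_V assms] by (cases "x = y") (simp_all add: dual_pairing_def)
  ultimately show ?thesis
    using rational_V by (auto simp: rat_vec_def intro!: Rats_divide det_Rats)
qed

lemma Ints_gorenstein_div_mu:
  assumes "x \<in> V"
  shows "real (gorenstein (convex hull V)) / \<mu> x \<in> \<int>"
proof -
  interpret dual: barycentric_simplex "dual_vertex ` V" "dual_vertex w" "dual_vertex \<circ> f"
    "\<mu> \<circ> inv_into V dual_vertex"
    by (rule barycentric_simplex_dual)
  let ?g = "real (gorenstein (convex hull V))"
  let ?gS = "gQ (convex hull V)" and ?gD = "gQ (convex hull (dual_vertex ` V))"
  have "int_vec (real ?gS *\<^sub>R x)"
    using gQ_scales_to_int_vec[of "convex hull V"] finite_V rational_V assms
    by (simp add: verts_convex_hull)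
  moreover have "int_vec (real ?gD *\<^sub>R dual_vertex x)"
    using gQ_scales_to_int_vec[of "convex hull (dual_vertex ` V)"] finite_V rat_vec_dual_vertex assms
    by (simp add: dual.verts_convex_hull)
  ultimately have "(real ?gS *\<^sub>R x) \<bullet> (real ?gD *\<^sub>R dual_vertex x) \<in> \<int>"
    by (rule Ints_inner_int_vec)
  moreover have "x \<bullet> dual_vertex x = 1 / \<mu> x - 1"
    using inner_dual_vertex_left[OF assms assms] by (simp add: dual_pairing_def)
  then have "(real ?gS *\<^sub>R x) \<bullet> (real ?gD *\<^sub>R dual_vertex x) = ?g * (1 / \<mu> x - 1)"
    by (simp add: gorenstein_def dual_convex_hull)
  also have "\<dots> = ?g / \<mu> x - ?g"
    by (simp add: right_diff_distrib)
  ultimately show ?thesis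
    by (metis Ints_add Ints_of_nat diff_add_cancel)
qed

lemma unit_fraction_partition:
  obtains \<alpha> :: "real^'n \<Rightarrow> nat"
  where "\<forall>x\<in>V. real (\<alpha> x) = real (gorenstein (convex hull V)) / \<mu> x"
    and "ufp (convex hull V) = image_mset real (image_mset \<alpha> (mset_set V))"
proof -
  define \<alpha> where "\<alpha> x = nat \<lfloor>real (gorenstein (convex hull V)) / \<mu> x\<rfloor>" for x
  have \<alpha>: "\<forall>x\<in>V. real (\<alpha> x) = real (gorenstein (convex hull V)) / \<mu> x"
    using Ints_gorenstein_div_mu mu_pos by (simp add: \<alpha>_def real_nat_floor_Ints less_imp_le)
  moreover have "ufp (convex hull V) = image_mset real (image_mset \<alpha> (mset_set V))"
    unfolding ufp_convex_hull multiset.map_comp using \<alpha> finite_V by (intro image_mset_cong) simp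
  ultimately show ?thesis
    using that by blast
qed

lemma lam_dual:
  "lam (convex hull (dual_vertex ` V)) = Vol (convex hull (dual_vertex ` V)) * primitive_factor \<mu> V"
proof -
  interpret dual: barycentric_simplex "dual_vertex ` V" "dual_vertex w" "dual_vertex \<circ> f"
    "\<mu> \<circ> inv_into V dual_vertex"
    by (rule barycentric_simplex_dual)
  have "primitive_factor (\<mu> \<circ> inv_into V dual_vertex) (dual_vertex ` V) = 1 * primitive_factor \<mu> V"
    using finite_V w_in_V mu_rat[OF rational_V] mu_pos inj_on_dual_vertex
    by (intro primitive_factor_reindex_scale[where h = dual_vertex]) (auto simp: inj_on_imp_bij_betw)
  then show ?thesis
    using dual.lam_convex_hull rat_vec_dual_vertex by auto
qed

lemma gorenstein_pos: "gorenstein (convex hull V) > 0"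
proof -
  interpret dual: barycentric_simplex "dual_vertex ` V" "dual_vertex w" "dual_vertex \<circ> f"
    "\<mu> \<circ> inv_into V dual_vertex"
    by (rule barycentric_simplex_dual)
  have "gQ (convex hull V) \<ge> 1"
    using gQ_scales_to_int_vec(1)[of "convex hull V"] finite_V rational_V by (simp add: verts_convex_hull)
  moreover have "gQ (convex hull (dual_vertex ` V)) \<ge> 1"
    using gQ_scales_to_int_vec(1)[of "convex hull (dual_vertex ` V)"] finite_V rat_vec_dual_vertex
    by (simp add: dual.verts_convex_hull)
  ultimately show ?thesis
    by (simp add: gorenstein_def dual_convex_hull)
qed

end

end

lemma IP_simplex_barycentric:
  fixes S :: "(real^'n::finite) set"
  assumes "IP_simplex S"
  obtains V w f \<mu> where "barycentric_simplex V w f \<mu>" and "S = convex hull V" and "\<forall>v\<in>V. rat_vec v"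
proof -
  obtain V where V: "finite V" "card V = Suc CARD('n)" "\<not> affine_dependent V"
    "S = convex hull V" "\<forall>v\<in>V. rat_vec v" "0 \<in> interior S"
    using assms unfolding IP_simplex_def by auto
  have "\<not> card V \<le> DIM(real^'n)"
    using V(2) by simp
  then obtain \<mu> where \<mu>: "\<forall>x\<in>V. 0 < \<mu> x" "sum \<mu> V = 1" "(\<Sum>x\<in>V. \<mu> x *\<^sub>R x) = 0"
    using V(6) unfolding V(4) interior_convex_hull_explicit_minimal[OF V(3)] by auto
  obtain w where w: "w \<in> V"
    using V(2) by fastforce
  then have "card (V - {w}) = card (UNIV :: 'n set)"
    using V(1,2) by simp
  then obtain f where "bij_betw f (UNIV :: 'n set) (V - {w})"
    using V(1) finite_same_card_bij by (metis finite_Diff finite_class.finite_UNIV)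
  then have "barycentric_simplex V w f \<mu>"
    using V \<mu> w by unfold_locales auto
  then show ?thesis
    using that V(4,5) by blast
qed

theorem proposition2p10:
  fixes S :: "(real^'n) set"
  assumes "IP_simplex S"
  defines "g \<equiv> real (gorenstein S)" and "d \<equiv> CARD('n)"
  shows "\<exists>\<alpha>s :: nat multiset.
     ufp S = image_mset real \<alpha>s \<and>
     ufp (dual S) = ufp S \<and>
     Vol S * Vol (dual S) = real (prod_mset \<alpha>s) / g ^ (d + 1) \<and>
     lam (dual S) * Vol S = real (prod_mset \<alpha>s) / (g ^ d * real (Lcm (set_mset \<alpha>s))) \<and>
     lam S * Vol (dual S) = real (prod_mset \<alpha>s) / (g ^ d * real (Lcm (set_mset \<alpha>s))) \<and>
     lam S * lam (dual S) = real (prod_mset \<alpha>s) / (g ^ (d - 1) * real (Lcm (set_mset \<alpha>s)) ^ 2)"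
proof -
  obtain V w f \<mu> where "barycentric_simplex V w f \<mu>" and S: "S = convex hull V"
    and rat: "\<forall>v\<in>V. rat_vec v"
    using IP_simplex_barycentric[OF assms(1)] .
  then interpret barycentric_simplex V w f \<mu>
    by simp
  have dual_S: "dual S = convex hull (dual_vertex ` V)"
    by (simp add: S dual_convex_hull)
  obtain \<alpha> where \<alpha>: "\<forall>x\<in>V. real (\<alpha> x) = g / \<mu> x"
    and ufp_S: "ufp S = image_mset real (image_mset \<alpha> (mset_set V))"
    unfolding g_def S by (rule unit_fraction_partition[OF rat])
  have card: "card V = d + 1" and "d \<ge> 1" and mu: "\<forall>x\<in>V. \<mu> x \<in> \<rat> \<and> \<mu> x > 0" and "g > 0"
    using card_V mu_rat[OF rat] mu_pos gorenstein_pos[OF rat] by (auto simp: d_def g_def S)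
  have "Vol S * Vol (dual S) = (\<Prod>x\<in>V. 1 / \<mu> x)"
    unfolding dual_S unfolding S by (rule Vol_mult_Vol_dual)
  note identities = unit_fraction_partition_identities[OF finite_V card \<open>d \<ge> 1\<close> mu \<open>g > 0\<close> \<alpha> this]
  have "ufp (dual S) = ufp S"
    unfolding dual_S unfolding S by (rule ufp_dual)
  moreover have "lam S = primitive_factor \<mu> V * Vol S" "lam (dual S) = primitive_factor \<mu> V * Vol (dual S)"
    unfolding dual_S unfolding S by (simp_all add: lam_convex_hull[OF rat] lam_dual[OF rat] mult.commute)
  ultimately show ?thesis
    using ufp_S identities by (intro exI[of _ "image_mset \<alpha> (mset_set V)"]) (simp add: mult_ac)
qed

end
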